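(* Fix $b>1$ and $(a,E,c)\in\mathcal{B}$, let $\mu=\mu(\cdot;a,E,c)$ be the associated $T$-periodic even traveling wave profile, and let $\mu_+(a,E,c):=\mu(0;a,E,c)$ denote the global maximum of $\mu$. Then $\mu_{xx}(0)<0$ and \[ \{\mu_+,\omega_1\}_{E,c}>0. \]
   Context: Fix $b>1$. For $c>0$, $a>0$, $\varphi<c$ let $V(\varphi;a,c)=-\tfrac12\varphi^2+\frac{a}{(b-1)(c-\varphi)^{b-1}}$. For $0<a<\frac{b^bc^{b+1}}{(b+1)^{b+1}}$ the equation $\varphi(c-\varphi)^b=a$ has exactly two solutions $\varphi_1\in(0,\frac{c}{b+1})$, $\varphi_2\in(\frac{c}{b+1},c)$. Let $\mathcal{B}=\{(a,E,c): c>0,\ 0<a<\frac{b^bc^{b+1}}{(b+1)^{b+1}},\ V(\varphi_2;a,c)<E<V(\varphi_1;a,c)\}$. For $(a,E,c)\in\mathcal{B}$ let $\varphi(\cdot;a,E,c)$ be the smooth periodic solution of $\tfrac12(\varphi')^2=E-V(\varphi;a,c)$ with $\varphi<c$, translated so that it is even with its maximum at $x=0$; it satisfies $\varphi-\varphi''=a/(c-\varphi)^b$, and $u(x,t)=\varphi(x-ct)$ is a traveling wave of $u_t-u_{txx}+(b+1)uu_x=bu_xu_{xx}+uu_{xxx}$. Set $\mu(x;a,E,c)=a/(c-\varphi(x;a,E,c))^b$ (the momentum density), a traveling wave of $m_t+um_x+bmu_x=0$. Let $\omega_1(a,E,c)=\frac{1}{2a^{1/b}}[2(b-1)E+(b-1)c^2]$.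 Jacobian notation: $\{f,g\}_{E,c}=f_Eg_c-f_cg_E$, with $f,g$ regarded as functions of $(a,E,c)$. *)

theory Defs
  imports "HOL-Analysis.Analysis"
begin

definition Vpot :: "real \<Rightarrow> real \<Rightarrow> real \<Rightarrow> real \<Rightarrow> real" where
  "Vpot b a c p = - (p\<^sup>2) / 2 + a / ((b - 1) * (c - p) powr (b - 1))"

definition phi1 :: "real \<Rightarrow> real \<Rightarrow> real \<Rightarrow> real" where
  "phi1 b a c = (THE p. 0 < p \<and> p < c / (b + 1) \<and> p * (c - p) powr b = a)"

definition phi2 :: "real \<Rightarrow> real \<Rightarrow> real \<Rightarrow> real" where
  "phi2 b a c = (THE p. c / (b + 1) < p \<and> p < c \<and> p * (c - p) powr b = a)"

definition regionB :: "real \<Rightarrow> (real \<times> real \<times> real) set" where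
  "regionB b = {(a, E, c). 0 < c \<and> 0 < a \<and>
      a < b powr b * c powr (b + 1) / (b + 1) powr (b + 1) \<and>
      Vpot b a c (phi2 b a c) < E \<and> E < Vpot b a c (phi1 b a c)}"

definition is_profile :: "real \<Rightarrow> real \<Rightarrow> real \<Rightarrow> real \<Rightarrow> (real \<Rightarrow> real) \<Rightarrow> bool" where
  "is_profile b a E c phi \<longleftrightarrow>
     (\<forall>x. phi differentiable (at x)) \<and>
     (\<forall>x. deriv phi differentiable (at x)) \<and>
     (\<forall>x. phi x < c) \<and>
     (\<forall>x. (deriv phi x)\<^sup>2 / 2 = E - Vpot b a c (phi x)) \<and>
     (\<forall>x. phi x - deriv (deriv phi) x = a / (c - phi x) powr b) \<and>
     (\<exists>T>0. \<forall>x. phi (x + T) = phi x) \<and>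
     (\<forall>x. phi (- x) = phi x) \<and>
     (\<forall>x. phi x \<le> phi 0)"

definition momentum :: "real \<Rightarrow> real \<Rightarrow> real \<Rightarrow> (real \<Rightarrow> real) \<Rightarrow> real \<Rightarrow> real" where
  "momentum b a c phi x = a / (c - phi x) powr b"

definition omega1 :: "real \<Rightarrow> real \<Rightarrow> real \<Rightarrow> real \<Rightarrow> real" where
  "omega1 b a E c = (2 * (b - 1) * E + (b - 1) * c\<^sup>2) / (2 * a powr (1 / b))"

definition has_partials_Ec ::
  "(real \<Rightarrow> real \<Rightarrow> real \<Rightarrow> real) \<Rightarrow> real \<Rightarrow> real \<Rightarrow> real \<Rightarrow> real \<Rightarrow> real \<Rightarrow> bool" where
  "has_partials_Ec f a E c fE fc \<longleftrightarrow>
     ((\<lambda>e. f a e c) has_real_derivative fE) (at E) \<and>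
     ((\<lambda>k. f a E k) has_real_derivative fc) (at c)"

end

theory Submission
  imports Defs
begin

(*
  Write p = phi(0) for the crest and V' = dVpot. Since phi'' = - V'(phi), the crest is a turning
  point V(p) = E with V'(p) >= 0. The roots phi1 and phi2 of V' are excluded because E lies strictly
  between V(phi2) and V(phi1), and p <= c/(b+1) is excluded because then phi'' < 0 everywhere,
  which is impossible for a periodic function. So p lies on the branch (phi2, c) where V' > 0,
  and mu''(0) = a b (c - p)^(-b-1) phi''(0) < 0.

  V is strictly increasing on that branch, so p is determined by (a, E, c) and is a local inverse
  of V in E: dp/dE = 1/V'(p). For the dependence on c, the energy equation is solved for c as a
  function of the gap s = c - p, namely c = s + sqrt(2 (a s^(1-b)/(b-1) - E)); inverting this gives
  d(c - p)/dc = -p/V'(p). With mu_+ = a (c - p)^(-b) and K = a b (c - p)^(-b-1) > 0 the partials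
  of mu_+ are K/V'(p) and K p/V'(p), those of omega1 are W and W c with W > 0, and the Jacobian
  equals K W (c - p)/V'(p) > 0.
*)

lemma isCont_eventually_less:
  fixes f :: "'a::t2_space \<Rightarrow> 'b::linorder_topology"
  assumes "isCont f x" "f x < l"
  shows "\<forall>\<^sub>F y in nhds x. f y < l"
  using order_tendstoD(2)[OF assms(1)[unfolded isCont_def tendsto_at_iff_tendsto_nhds] assms(2)] .

lemma isCont_eventually_greater:
  fixes f :: "'a::t2_space \<Rightarrow> 'b::linorder_topology"
  assumes "isCont f x" "l < f x"
  shows "\<forall>\<^sub>F y in nhds x. l < f y"
  using order_tendstoD(1)[OF assms(1)[unfolded isCont_def tendsto_at_iff_tendsto_nhds] assms(2)] .

(* Only a left inverse is required: by invariance of domain f is an open map near x, which makes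
   g continuous at f x. *)
lemma DERIV_left_inverse:
  fixes f g :: "real \<Rightarrow> real"
  assumes "(f has_real_derivative D) (at x)" "D \<noteq> 0"
    and "\<forall>\<^sub>F z in nhds x. isCont f z \<and> g (f z) = z"
  shows "(g has_real_derivative inverse D) (at (f x))"
proof -
  obtain S where S: "open S" "x \<in> S" "\<And>z. z \<in> S \<Longrightarrow> isCont f z \<and> g (f z) = z"
    using assms(3) unfolding eventually_nhds by blast
  have "(g has_derivative (*) (inverse D)) (at (f x))"
  proof (rule has_derivative_inverse_strong[OF S(1,2)])
    show "continuous_on S f" using S by (blast intro: continuous_at_imp_continuous_on)
    show "(f has_derivative (*) D) (at x)" using assms(1) by (simp add: has_field_derivative_def)
    show "(*) D \<circ> (*) (inverse D) = id" using assms(2) by (auto simp: fun_eq_iff)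
  qed (use S in blast)
  then show ?thesis by (simp add: has_field_derivative_def)
qed

lemma second_derivative_nonpos_at_max:
  fixes f f' :: "real \<Rightarrow> real"
  assumes f': "\<And>y. (f has_real_derivative f' y) (at y)"
    and f'': "(f' has_real_derivative f'') (at x)"
    and max: "\<And>y. f y \<le> f x"
  shows "f'' \<le> 0"
proof (rule ccontr)
  assume "\<not> f'' \<le> 0"
  then obtain d where "d > 0" and inc: "\<And>h. 0 < h \<Longrightarrow> h < d \<Longrightarrow> f' x < f' (x + h)"
    using DERIV_pos_inc_right[OF f''] by force
  have "f' x = 0" using DERIV_local_max[OF f' zero_less_one] max by blast
  have "f x < f (x + d / 2)"
  proof (rule DERIV_pos_imp_increasing_open[of x "x + d / 2" f])
    fix z assume "x < z" "z < x + d / 2"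
    then show "\<exists>y. (f has_real_derivative y) (at z) \<and> 0 < y"
      using f' inc[of "z - x"] \<open>f' x = 0\<close> by force
  qed (use \<open>d > 0\<close> f' in \<open>auto intro!: DERIV_atLeastAtMost_imp_continuous_on\<close>)
  then show False using max by (simp add: not_less[symmetric])
qed

lemma concave_less_after_critical_point:
  fixes f f' f'' :: "real \<Rightarrow> real"
  assumes f': "\<And>y. (f has_real_derivative f' y) (at y)"
    and f'': "\<And>y. (f' has_real_derivative f'' y) (at y)"
    and "\<And>y. f'' y < 0" "f' x = 0" "0 < T"
  shows "f (x + T) < f x"
proof (rule DERIV_neg_imp_decreasing_open[of x "x + T" f])
  fix z assume "x < z" "z < x + T"
  have "f' z < f' x" by (rule DERIV_neg_imp_decreasing[OF \<open>x < z\<close>]) (use f'' assms(3) in blast)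
  then show "\<exists>y. (f has_real_derivative y) (at z) \<and> y < 0" using f' \<open>f' x = 0\<close> by force
qed (use \<open>0 < T\<close> f' in \<open>auto intro!: DERIV_atLeastAtMost_imp_continuous_on\<close>)

(* dVpot b a c p = (a - crit_fun b c p) / (c - p) powr b, so the critical points phi1, phi2
   of V are the roots of crit_fun b c p = a. *)
definition crit_fun :: "real \<Rightarrow> real \<Rightarrow> real \<Rightarrow> real" where
  "crit_fun b c p = p * (c - p) powr b"

lemma crit_fun_has_real_derivative:
  assumes "p < c"
  shows "(crit_fun b c has_real_derivative (c - p) powr (b - 1) * (c - (b + 1) * p)) (at p)"
proof -
  have "(crit_fun b c has_real_derivative (c - p) powr b - p * (b * (c - p) powr (b - 1))) (at p)"
    unfolding crit_fun_def using assms
    by (auto intro!: derivative_eq_intros DERIV_fun_powr[where g = "\<lambda>p. c - p", THEN DERIV_cong])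
  moreover have "(c - p) powr b = (c - p) * (c - p) powr (b - 1)"
    using assms by (simp add: powr_diff)
  ultimately show ?thesis by (simp add: algebra_simps)
qed

lemma continuous_on_crit_fun:
  assumes "b > 0"
  shows "continuous_on {..c} (crit_fun b c)"
  unfolding crit_fun_def using assms
  by (intro continuous_on_mult continuous_on_id continuous_on_powr' continuous_on_diff
      continuous_on_const) auto

lemma crit_fun_less_left:
  assumes "b > 0" "c > 0" "x < y" "y \<le> c / (b + 1)"
  shows "crit_fun b c x < crit_fun b c y"
proof -
  have "c / (b + 1) < c" using assms by (simp add: divide_less_eq)
  then have "y < c" using assms by simp
  show ?thesis
  proof (rule DERIV_pos_imp_increasing_open[OF \<open>x < y\<close>])
    fix z assume "x < z" "z < y"
    have "(b + 1) * z < (b + 1) * y" using \<open>z < y\<close> \<open>b > 0\<close> by simp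
    also have "\<dots> \<le> c" using assms by (simp add: pos_le_divide_eq mult.commute)
    finally have "0 < c - (b + 1) * z" by simp
    moreover have "z < c" using \<open>z < y\<close> \<open>y < c\<close> by simp
    ultimately show "\<exists>d. (crit_fun b c has_real_derivative d) (at z) \<and> d > 0"
      using crit_fun_has_real_derivative[of z c b] by force
  next
    show "continuous_on {x..y} (crit_fun b c)"
      by (rule continuous_on_subset[OF continuous_on_crit_fun[OF \<open>b > 0\<close>]]) (use \<open>y < c\<close> in auto)
  qed
qed

lemma crit_fun_greater_right:
  assumes "b > 0" "c / (b + 1) \<le> x" "x < y" "y < c"
  shows "crit_fun b c y < crit_fun b c x"
proof (rule DERIV_neg_imp_decreasing_open[OF \<open>x < y\<close>])
  fix z assume "x < z" "z < y"
  have "c \<le> (b + 1) * x" using assms by (simp add: pos_divide_le_eq mult.commute)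
  also have "\<dots> < (b + 1) * z" using \<open>x < z\<close> \<open>b > 0\<close> by simp
  finally have "c - (b + 1) * z < 0" by simp
  moreover have "z < c" using \<open>z < y\<close> \<open>y < c\<close> by simp
  ultimately show "\<exists>d. (crit_fun b c has_real_derivative d) (at z) \<and> d < 0"
    using crit_fun_has_real_derivative by (force intro: mult_pos_neg)
next
  show "continuous_on {x..y} (crit_fun b c)"
    by (rule continuous_on_subset[OF continuous_on_crit_fun[OF \<open>b > 0\<close>]]) (use assms in auto)
qed

lemma crit_fun_max_value:
  assumes "b > 0" "c > 0"
  shows "crit_fun b c (c / (b + 1)) = b powr b * c powr (b + 1) / (b + 1) powr (b + 1)"
proof -
  have "c - c / (b + 1) = b * c / (b + 1)"
    using assms by (simp add: field_simps)
  then have "crit_fun b c (c / (b + 1)) = c / (b + 1) * (b powr b * c powr b / (b + 1) powr b)"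
    unfolding crit_fun_def using assms by (simp add: powr_divide powr_mult)
  also have "\<dots> = b powr b * c powr (b + 1) / (b + 1) powr (b + 1)"
    using assms by (simp add: powr_add field_simps)
  finally show ?thesis .
qed

lemma crit_fun_left_root_ex1:
  assumes "b > 0" "c > 0" "0 < a" "a < crit_fun b c (c / (b + 1))"
  shows "\<exists>!p. 0 < p \<and> p < c / (b + 1) \<and> p * (c - p) powr b = a"
proof -
  have "continuous_on {0..c / (b + 1)} (crit_fun b c)"
    by (rule continuous_on_subset[OF continuous_on_crit_fun[OF \<open>b > 0\<close>]])
       (use assms in \<open>auto simp: divide_le_eq\<close>)
  then obtain p where p: "0 \<le> p" "p \<le> c / (b + 1)" "crit_fun b c p = a"
    using IVT'[of "crit_fun b c" 0 a "c / (b + 1)"] assms by (auto simp: crit_fun_def)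
  have "p \<noteq> 0" "p \<noteq> c / (b + 1)"
    using p assms by (auto simp: crit_fun_def)
  with p have "0 < p \<and> p < c / (b + 1) \<and> crit_fun b c p = a" by auto
  moreover have "q = p" if "0 < q \<and> q < c / (b + 1) \<and> crit_fun b c q = a" for q
    using crit_fun_less_left[OF assms(1,2), of p q] crit_fun_less_left[OF assms(1,2), of q p] that p
    by (cases p q rule: linorder_cases) auto
  ultimately show ?thesis unfolding crit_fun_def by blast
qed

lemma crit_fun_right_root_ex1:
  assumes "b > 0" "c > 0" "0 < a" "a < crit_fun b c (c / (b + 1))"
  shows "\<exists>!p. c / (b + 1) < p \<and> p < c \<and> p * (c - p) powr b = a"
proof -
  have "c / (b + 1) \<le> c" using assms by (simp add: divide_le_eq)
  moreover have "continuous_on {c / (b + 1)..c} (crit_fun b c)"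
    by (rule continuous_on_subset[OF continuous_on_crit_fun[OF \<open>b > 0\<close>]]) auto
  ultimately obtain p where p: "c / (b + 1) \<le> p" "p \<le> c" "crit_fun b c p = a"
    using IVT2'[of "crit_fun b c" c a "c / (b + 1)"] assms by (auto simp: crit_fun_def)
  have "p \<noteq> c" "p \<noteq> c / (b + 1)"
    using p assms by (auto simp: crit_fun_def)
  with p have "c / (b + 1) < p \<and> p < c \<and> crit_fun b c p = a" by auto
  moreover have "q = p" if "c / (b + 1) < q \<and> q < c \<and> crit_fun b c q = a" for q
    using crit_fun_greater_right[OF assms(1), of c p q] crit_fun_greater_right[OF assms(1), of c q p]
      that p \<open>p \<noteq> c\<close>
    by (cases p q rule: linorder_cases) auto
  ultimately show ?thesis unfolding crit_fun_def by blast
qed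

lemma phi1_root:
  assumes "b > 0" "c > 0" "0 < a" "a < crit_fun b c (c / (b + 1))"
  shows "0 < phi1 b a c" "phi1 b a c < c / (b + 1)" "crit_fun b c (phi1 b a c) = a"
  using theI'[OF crit_fun_left_root_ex1[OF assms]] unfolding phi1_def crit_fun_def by auto

lemma phi2_root:
  assumes "b > 0" "c > 0" "0 < a" "a < crit_fun b c (c / (b + 1))"
  shows "c / (b + 1) < phi2 b a c" "phi2 b a c < c" "crit_fun b c (phi2 b a c) = a"
  using theI'[OF crit_fun_right_root_ex1[OF assms]] unfolding phi2_def crit_fun_def by auto

lemma crit_fun_eq_iff_phi1_or_phi2:
  assumes "b > 0" "c > 0" "0 < a" "a < crit_fun b c (c / (b + 1))" "p < c"
  shows "crit_fun b c p = a \<longleftrightarrow> p = phi1 b a c \<or> p = phi2 b a c"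
proof
  assume root: "crit_fun b c p = a"
  then have "p > 0"
    using assms by (auto simp: crit_fun_def zero_less_mult_iff)
  consider "p < c / (b + 1)" | "p = c / (b + 1)" | "c / (b + 1) < p" by linarith
  then show "p = phi1 b a c \<or> p = phi2 b a c"
  proof cases
    case 1
    then show ?thesis
      using the1_equality[OF crit_fun_left_root_ex1[OF assms(1-4)]] root \<open>p > 0\<close>
      unfolding phi1_def crit_fun_def by auto
  next
    case 2
    then show ?thesis using root assms by simp
  next
    case 3
    then show ?thesis
      using the1_equality[OF crit_fun_right_root_ex1[OF assms(1-4)]] root \<open>p < c\<close>
      unfolding phi2_def crit_fun_def by auto
  qed
qed (use phi1_root[OF assms(1-4)] phi2_root[OF assms(1-4)] in auto)

definition dVpot :: "real \<Rightarrow> real \<Rightarrow> real \<Rightarrow> real \<Rightarrow> real" where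
  "dVpot b a c p = - p + a / (c - p) powr b"

lemma Vpot_eq_powr:
  assumes "p < c"
  shows "Vpot b a c p = - (p\<^sup>2) / 2 + a / (b - 1) * (c - p) powr (1 - b)"
  using assms powr_minus_divide[of "c - p" "b - 1"] unfolding Vpot_def by simp

lemma Vpot_has_real_derivative:
  assumes "b \<noteq> 1" "p < c"
  shows "(Vpot b a c has_real_derivative dVpot b a c p) (at p)"
proof -
  let ?V = "\<lambda>p. - (p\<^sup>2) / 2 + a / (b - 1) * (c - p) powr (1 - b)"
  have "(?V has_real_derivative - p + a / (b - 1) * ((1 - b) * (c - p) powr (1 - b - 1) * - 1)) (at p)"
    using assms
    by (auto intro!: derivative_eq_intros DERIV_fun_powr[where g = "\<lambda>p. c - p", THEN DERIV_cong])
  moreover have "- p + a / (b - 1) * ((1 - b) * (c - p) powr (1 - b - 1) * - 1) = dVpot b a c p"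
    using assms powr_minus_divide[of "c - p" b] unfolding dVpot_def by (simp add: field_simps)
  ultimately have "(?V has_real_derivative dVpot b a c p) (at p)"
    by metis
  moreover have "\<forall>\<^sub>F q in nhds p. Vpot b a c q = ?V q"
    using eventually_nhds_in_open[of "{..<c}" p] assms by (auto elim!: eventually_mono simp: Vpot_eq_powr)
  ultimately show ?thesis
    using DERIV_cong_ev[where f = "Vpot b a c" and g = ?V, OF refl _ refl] by blast
qed

lemma isCont_Vpot: "b \<noteq> 1 \<Longrightarrow> p < c \<Longrightarrow> isCont (Vpot b a c) p"
  using Vpot_has_real_derivative DERIV_isCont by blast

lemma dVpot_pos_iff: "p < c \<Longrightarrow> 0 < dVpot b a c p \<longleftrightarrow> crit_fun b c p < a"
  unfolding dVpot_def crit_fun_def by (simp add: pos_less_divide_eq flip: diff_less_eq)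

lemma dVpot_neg_iff: "p < c \<Longrightarrow> dVpot b a c p < 0 \<longleftrightarrow> a < crit_fun b c p"
  unfolding dVpot_def crit_fun_def by (simp add: pos_divide_less_eq flip: less_diff_eq)

lemma Vpot_increasing:
  assumes "b \<noteq> 1" "x < y" "y < c" "\<And>z. x < z \<Longrightarrow> z < y \<Longrightarrow> crit_fun b c z < a"
  shows "Vpot b a c x < Vpot b a c y"
proof (rule DERIV_pos_imp_increasing_open[OF \<open>x < y\<close>])
  fix z assume "x < z" "z < y"
  then show "\<exists>d. (Vpot b a c has_real_derivative d) (at z) \<and> d > 0"
    using Vpot_has_real_derivative[OF \<open>b \<noteq> 1\<close>] dVpot_pos_iff assms by (meson order.strict_trans)
qed (use assms isCont_Vpot in \<open>auto intro!: continuous_at_imp_continuous_on\<close>)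

lemma Vpot_decreasing:
  assumes "b \<noteq> 1" "x < y" "y < c" "\<And>z. x < z \<Longrightarrow> z < y \<Longrightarrow> a < crit_fun b c z"
  shows "Vpot b a c y < Vpot b a c x"
proof (rule DERIV_neg_imp_decreasing_open[OF \<open>x < y\<close>])
  fix z assume "x < z" "z < y"
  then show "\<exists>d. (Vpot b a c has_real_derivative d) (at z) \<and> d < 0"
    using Vpot_has_real_derivative[OF \<open>b \<noteq> 1\<close>] dVpot_neg_iff assms by (meson order.strict_trans)
qed (use assms isCont_Vpot in \<open>auto intro!: continuous_at_imp_continuous_on\<close>)

lemma Vpot_le_Vpot_phi1:
  assumes "b > 1" "c > 0" "0 < a" "a < crit_fun b c (c / (b + 1))" "0 < r" "r \<le> c / (b + 1)"
  shows "Vpot b a c r \<le> Vpot b a c (phi1 b a c)"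
proof -
  have "b > 0" "b \<noteq> 1" using \<open>b > 1\<close> by auto
  note phi1 = phi1_root[OF \<open>b > 0\<close> assms(2-4)]
  have "c / (b + 1) < c" using assms by (simp add: divide_less_eq)
  consider "r < phi1 b a c" | "r = phi1 b a c" | "phi1 b a c < r" by linarith
  then show ?thesis
  proof cases
    case 1
    have "Vpot b a c r < Vpot b a c (phi1 b a c)"
    proof (rule Vpot_increasing[OF \<open>b \<noteq> 1\<close> 1])
      show "phi1 b a c < c" using phi1 \<open>c / (b + 1) < c\<close> by linarith
      fix z assume "r < z" "z < phi1 b a c"
      then show "crit_fun b c z < a"
        using crit_fun_less_left[OF \<open>b > 0\<close> \<open>c > 0\<close> \<open>z < phi1 b a c\<close>] phi1 by simp
    qed
    then show ?thesis by simp
  next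
    case 3
    have "Vpot b a c r < Vpot b a c (phi1 b a c)"
    proof (rule Vpot_decreasing[OF \<open>b \<noteq> 1\<close> 3])
      show "r < c" using assms(6) \<open>c / (b + 1) < c\<close> by linarith
      fix z assume "phi1 b a c < z" "z < r"
      then show "a < crit_fun b c z"
        using crit_fun_less_left[OF \<open>b > 0\<close> \<open>c > 0\<close> \<open>phi1 b a c < z\<close>] phi1 assms(6) by simp
    qed
    then show ?thesis by simp
  qed simp
qed

lemma Vpot_phi2_le_Vpot:
  assumes "b > 1" "c > 0" "0 < a" "a < crit_fun b c (c / (b + 1))" "c / (b + 1) \<le> q" "q < c"
  shows "Vpot b a c (phi2 b a c) \<le> Vpot b a c q"
proof -
  have "b > 0" "b \<noteq> 1" using \<open>b > 1\<close> by auto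
  note phi2 = phi2_root[OF \<open>b > 0\<close> assms(2-4)]
  consider "q < phi2 b a c" | "q = phi2 b a c" | "phi2 b a c < q" by linarith
  then show ?thesis
  proof cases
    case 1
    have "Vpot b a c (phi2 b a c) < Vpot b a c q"
    proof (rule Vpot_decreasing[OF \<open>b \<noteq> 1\<close> 1 phi2(2)])
      fix z assume "q < z" "z < phi2 b a c"
      then show "a < crit_fun b c z"
        using crit_fun_greater_right[OF \<open>b > 0\<close> _ \<open>z < phi2 b a c\<close> phi2(2)] phi2 assms(5) by simp
    qed
    then show ?thesis by simp
  next
    case 3
    have "Vpot b a c (phi2 b a c) < Vpot b a c q"
    proof (rule Vpot_increasing[OF \<open>b \<noteq> 1\<close> 3 \<open>q < c\<close>])
      fix z assume "phi2 b a c < z" "z < q"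
      then show "crit_fun b c z < a"
        using crit_fun_greater_right[of b c "phi2 b a c" z] phi2 \<open>b > 0\<close> \<open>q < c\<close> by simp
    qed
    then show ?thesis by simp
  qed simp
qed

(* The interval (phi2 b a c, c), on which V is increasing. *)
definition upper_branch :: "real \<Rightarrow> real \<Rightarrow> real \<Rightarrow> real \<Rightarrow> bool" where
  "upper_branch b a c q \<longleftrightarrow> c / (b + 1) < q \<and> q < c \<and> crit_fun b c q < a"

lemma upper_branch_pos:
  assumes "b > 0" "upper_branch b a c q"
  shows "0 < q"
proof -
  have "c > 0"
  proof (rule ccontr)
    assume "\<not> c > 0"
    then have "c * (b + 1) \<le> c" using \<open>b > 0\<close> mult_nonneg_nonpos[of b c] by (simp add: algebra_simps)
    then have "c \<le> c / (b + 1)" using \<open>b > 0\<close> by (simp add: le_divide_eq)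
    with assms show False unfolding upper_branch_def by linarith
  qed
  then have "0 < c / (b + 1)" using \<open>b > 0\<close> by simp
  then show ?thesis using assms unfolding upper_branch_def by linarith
qed

lemma upper_branch_Vpot_inj:
  assumes "b > 1" "upper_branch b a c x" "upper_branch b a c y" "Vpot b a c x = Vpot b a c y"
  shows "x = y"
proof -
  have less: "Vpot b a c x < Vpot b a c y"
    if "upper_branch b a c x" "upper_branch b a c y" "x < y" for x y
  proof (rule Vpot_increasing[OF _ \<open>x < y\<close>])
    fix z assume "x < z" "z < y"
    then have "crit_fun b c z < crit_fun b c x"
      using crit_fun_greater_right[of b c x z] that \<open>b > 1\<close> unfolding upper_branch_def by auto
    then show "crit_fun b c z < a" using that unfolding upper_branch_def by simp
  qed (use that \<open>b > 1\<close> in \<open>auto simp: upper_branch_def\<close>)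
  show ?thesis
    using less[OF assms(2,3)] less[OF assms(3,2)] assms(4) by (cases x y rule: linorder_cases) auto
qed

lemma eventually_upper_branch:
  assumes "b > 0" "isCont k x" "isCont q x" "upper_branch b a (k x) (q x)"
  shows "\<forall>\<^sub>F y in nhds x. upper_branch b a (k y) (q y)"
proof -
  have "0 < k x - q x" using assms(4) unfolding upper_branch_def by simp
  then have crit: "isCont (\<lambda>y. crit_fun b (k y) (q y)) x"
    unfolding crit_fun_def using assms(2,3) by (intro continuous_intros) (auto simp: Lim_ident_at)
  have diffs: "isCont (\<lambda>y. q y - k y / (b + 1)) x" "isCont (\<lambda>y. k y - q y) x"
    using assms(1-3) by (intro continuous_intros; simp)+
  have "\<forall>\<^sub>F y in nhds x. crit_fun b (k y) (q y) < a"
    "\<forall>\<^sub>F y in nhds x. 0 < q y - k y / (b + 1)" "\<forall>\<^sub>F y in nhds x. 0 < k y - q y"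
    using isCont_eventually_less[OF crit] isCont_eventually_greater[OF diffs(1), of 0]
      isCont_eventually_greater[OF diffs(2), of 0] assms(4)
    unfolding upper_branch_def by auto
  then show ?thesis
    by eventually_elim (simp add: upper_branch_def)
qed

lemma mem_regionB_iff:
  assumes "b > 1"
  shows "(a, E, c) \<in> regionB b \<longleftrightarrow> 0 < c \<and> 0 < a \<and> a < crit_fun b c (c / (b + 1)) \<and>
    Vpot b a c (phi2 b a c) < E \<and> E < Vpot b a c (phi1 b a c)"
  using crit_fun_max_value[of b c] assms unfolding regionB_def by auto

lemma regionB_eventually_nhds_speed:
  assumes "b > 1" "(a, E, c) \<in> regionB b"
  shows "\<forall>\<^sub>F k in nhds c. (a, E, k) \<in> regionB b"
proof -
  have "b > 0" using \<open>b > 1\<close> by simp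
  have "0 < c" "0 < a" and max: "a < crit_fun b c (c / (b + 1))"
    and E: "Vpot b a c (phi2 b a c) < E" "E < Vpot b a c (phi1 b a c)"
    using assms(2) mem_regionB_iff[OF \<open>b > 1\<close>] by auto
  define r q where "r = phi1 b a c" and "q = phi2 b a c"
  note phi1 = phi1_root[OF \<open>b > 0\<close> \<open>0 < c\<close> \<open>0 < a\<close> max, folded r_def]
  note phi2 = phi2_root[OF \<open>b > 0\<close> \<open>0 < c\<close> \<open>0 < a\<close> max, folded q_def]
  have "c / (b + 1) < c" "r < c" using phi1 phi2 by linarith+
  have "isCont (\<lambda>k. crit_fun b k (k / (b + 1))) c"
    unfolding crit_fun_def using \<open>b > 0\<close> \<open>c / (b + 1) < c\<close>
    by (intro continuous_intros) (auto simp: Lim_ident_at)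
  then have "\<forall>\<^sub>F k in nhds c. a < crit_fun b k (k / (b + 1))"
    using isCont_eventually_greater max by blast
  moreover have "\<forall>\<^sub>F k in nhds c. 0 < k" "\<forall>\<^sub>F k in nhds c. q < k"
    using isCont_eventually_greater[OF continuous_ident] \<open>0 < c\<close> phi2 by blast+
  moreover have "isCont (\<lambda>k. k / (b + 1)) c" by (intro continuous_intros) (use \<open>b > 0\<close> in simp)
  then have "\<forall>\<^sub>F k in nhds c. r < k / (b + 1)" "\<forall>\<^sub>F k in nhds c. k / (b + 1) < q"
    using isCont_eventually_greater isCont_eventually_less phi1 phi2 by blast+
  moreover have "isCont (\<lambda>k. Vpot b a k r) c" "isCont (\<lambda>k. Vpot b a k q) c"
    unfolding Vpot_def using \<open>b > 1\<close> \<open>r < c\<close> phi2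
    by (intro continuous_intros; simp add: Lim_ident_at)+
  then have "\<forall>\<^sub>F k in nhds c. E < Vpot b a k r" "\<forall>\<^sub>F k in nhds c. Vpot b a k q < E"
    using isCont_eventually_greater isCont_eventually_less E unfolding r_def q_def by blast+
  ultimately show ?thesis
  proof eventually_elim
    case (elim k)
    then have "0 < r" "Vpot b a k r \<le> Vpot b a k (phi1 b a k)"
      "Vpot b a k (phi2 b a k) \<le> Vpot b a k q"
      using Vpot_le_Vpot_phi1[OF \<open>b > 1\<close>, of k a r] Vpot_phi2_le_Vpot[OF \<open>b > 1\<close>, of k a q]
        phi1 \<open>0 < a\<close> by auto
    then show ?case using elim \<open>0 < a\<close> mem_regionB_iff[OF \<open>b > 1\<close>] by auto
  qed
qed

lemma is_profile_DERIV:
  assumes "is_profile b a E c \<phi>"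
  shows "(\<phi> has_real_derivative deriv \<phi> x) (at x)"
    and "(deriv \<phi> has_real_derivative deriv (deriv \<phi>) x) (at x)"
  using assms unfolding is_profile_def by (simp_all add: DERIV_deriv_iff_real_differentiable)

lemma is_profile_below: "is_profile b a E c \<phi> \<Longrightarrow> \<phi> x < c"
  unfolding is_profile_def by blast

lemma is_profile_second_deriv:
  "is_profile b a E c \<phi> \<Longrightarrow> deriv (deriv \<phi>) x = - dVpot b a c (\<phi> x)"
  unfolding is_profile_def dVpot_def by (simp add: algebra_simps)

lemma is_profile_turning_point:
  assumes "is_profile b a E c \<phi>"
  shows "deriv \<phi> 0 = 0" "Vpot b a c (\<phi> 0) = E"
proof -
  show "deriv \<phi> 0 = 0"
    using DERIV_local_max[OF is_profile_DERIV(1)[OF assms] zero_less_one] assms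
    unfolding is_profile_def by blast
  then show "Vpot b a c (\<phi> 0) = E"
    using assms unfolding is_profile_def by (metis power_zero_numeral div_0 eq_iff_diff_eq_0)
qed

lemma is_profile_crest_crit_fun_less:
  assumes "b > 1" "(a, E, c) \<in> regionB b" "is_profile b a E c \<phi>"
  shows "crit_fun b c (\<phi> 0) < a"
proof -
  note region = assms(2)[unfolded mem_regionB_iff[OF \<open>b > 1\<close>]]
  have "\<phi> 0 < c" by (rule is_profile_below[OF assms(3)])
  have "- dVpot b a c (\<phi> 0) \<le> 0"
    using second_derivative_nonpos_at_max[OF is_profile_DERIV[OF assms(3)]] assms(3)
    unfolding is_profile_second_deriv[OF assms(3)] is_profile_def by blast
  then have "\<not> a < crit_fun b c (\<phi> 0)"
    using dVpot_neg_iff[OF \<open>\<phi> 0 < c\<close>, of b a] by simp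
  moreover have "crit_fun b c (\<phi> 0) \<noteq> a"
  proof
    assume "crit_fun b c (\<phi> 0) = a"
    then have "\<phi> 0 = phi1 b a c \<or> \<phi> 0 = phi2 b a c"
      using crit_fun_eq_iff_phi1_or_phi2[of b c a] region \<open>b > 1\<close> \<open>\<phi> 0 < c\<close> by auto
    then show False using is_profile_turning_point(2)[OF assms(3)] region by auto
  qed
  ultimately show ?thesis by simp
qed

lemma is_profile_crest_upper_branch:
  assumes "b > 1" "(a, E, c) \<in> regionB b" "is_profile b a E c \<phi>"
  shows "upper_branch b a c (\<phi> 0)"
proof -
  have "0 < c" "0 < a" using assms(2) mem_regionB_iff[OF \<open>b > 1\<close>] by auto
  have below_c: "\<phi> x < c" for x by (rule is_profile_below[OF assms(3)])
  have max: "\<phi> x \<le> \<phi> 0" for x using assms(3) unfolding is_profile_def by blast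
  have crest: "crit_fun b c (\<phi> 0) < a" by (rule is_profile_crest_crit_fun_less[OF assms])
  have "\<not> \<phi> 0 \<le> c / (b + 1)" \<comment> \<open>else \<phi> would be strictly concave, yet it is periodic\<close>
  proof
    assume "\<phi> 0 \<le> c / (b + 1)"
    have "crit_fun b c (\<phi> x) < a" for x
    proof (cases "\<phi> x \<le> 0")
      case True
      then show ?thesis
        using \<open>0 < a\<close> mult_nonpos_nonneg[of "\<phi> x" "(c - \<phi> x) powr b"] by (simp add: crit_fun_def)
    next
      case False
      then have "crit_fun b c (\<phi> x) \<le> crit_fun b c (\<phi> 0)"
        using crit_fun_less_left[of b c "\<phi> x" "\<phi> 0"] max[of x] \<open>\<phi> 0 \<le> c / (b + 1)\<close>
          \<open>b > 1\<close> \<open>0 < c\<close> by (cases "\<phi> x = \<phi> 0") auto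
      then show ?thesis using crest by simp
    qed
    then have "deriv (deriv \<phi>) x < 0" for x
      using dVpot_pos_iff[OF below_c] is_profile_second_deriv[OF assms(3)] by simp
    moreover obtain T where "T > 0" "\<phi> (0 + T) = \<phi> 0"
      using assms(3) unfolding is_profile_def by metis
    ultimately show False
      using concave_less_after_critical_point[OF is_profile_DERIV[OF assms(3)]]
        is_profile_turning_point(1)[OF assms(3)] by fastforce
  qed
  then show ?thesis using crest below_c unfolding upper_branch_def by auto
qed

lemma is_profile_crest_eq:
  assumes "b > 1" "(a, E, c) \<in> regionB b" "is_profile b a E c \<phi>"
    and "upper_branch b a c q" "Vpot b a c q = E"
  shows "\<phi> 0 = q"
  using upper_branch_Vpot_inj[OF \<open>b > 1\<close> is_profile_crest_upper_branch[OF assms(1-3)] assms(4)]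
    is_profile_turning_point(2)[OF assms(3)] assms(5) by simp

lemma momentum_second_deriv_at_crest:
  assumes "b > 1" "(a, E, c) \<in> regionB b" "is_profile b a E c \<phi>"
  shows "deriv (deriv (momentum b a c \<phi>)) 0 < 0"
proof -
  note \<phi>' = is_profile_DERIV[OF assms(3)]
  have gap: "0 < c - \<phi> x" for x using is_profile_below[OF assms(3)] by simp
  have gap_powr: "((\<lambda>x. (c - \<phi> x) powr r) has_real_derivative
      r * (c - \<phi> x) powr (r - 1) * - deriv \<phi> x) (at x)" for r x
    using DERIV_fun_powr[OF DERIV_diff[OF DERIV_const \<phi>'(1)] gap, of r] by simp
  define h where "h x = a * b * (c - \<phi> x) powr (- b - 1)" for x
  have "momentum b a c \<phi> = (\<lambda>x. a * (c - \<phi> x) powr (- b))"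
    unfolding momentum_def by (simp add: powr_minus divide_inverse)
  moreover have "((\<lambda>x. a * (c - \<phi> x) powr (- b)) has_real_derivative h x * deriv \<phi> x) (at x)" for x
    using DERIV_cmult[OF gap_powr, of a "- b" x] unfolding h_def by (simp add: algebra_simps)
  ultimately have "deriv (momentum b a c \<phi>) = (\<lambda>x. h x * deriv \<phi> x)"
    by (intro ext DERIV_imp_deriv) simp
  moreover have "((\<lambda>x. h x * deriv \<phi> x) has_real_derivative h 0 * deriv (deriv \<phi>) 0) (at 0)"
    using DERIV_mult[OF DERIV_cmult[OF gap_powr, of "a * b" "- b - 1" 0] \<phi>'(2)]
      is_profile_turning_point(1)[OF assms(3)] unfolding h_def by (simp add: mult.commute)
  ultimately have "deriv (deriv (momentum b a c \<phi>)) 0 = h 0 * deriv (deriv \<phi>) 0"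
    using DERIV_imp_deriv by metis
  moreover have "h 0 > 0"
    unfolding h_def using assms(1,2) gap[of 0] mem_regionB_iff by simp
  moreover have "deriv (deriv \<phi>) 0 < 0"
    using is_profile_crest_upper_branch[OF assms] dVpot_pos_iff[of "\<phi> 0" c b a] gap[of 0]
      is_profile_second_deriv[OF assms(3)] unfolding upper_branch_def by simp
  ultimately show ?thesis by (simp add: mult_pos_neg)
qed

lemma crest_has_derivative_energy:
  assumes "b > 1" "(a, E, c) \<in> regionB b"
    and profiles: "\<And>e. (a, e, c) \<in> regionB b \<Longrightarrow> is_profile b a e c (\<Phi> e)"
  shows "((\<lambda>e. \<Phi> e 0) has_real_derivative inverse (dVpot b a c (\<Phi> E 0))) (at E)"
proof -
  have "b \<noteq> 1" "b > 0" using \<open>b > 1\<close> by auto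
  have region: "0 < c" "0 < a" "a < crit_fun b c (c / (b + 1))"
    "Vpot b a c (phi2 b a c) < E" "E < Vpot b a c (phi1 b a c)"
    using assms(2) mem_regionB_iff[OF \<open>b > 1\<close>] by auto
  define p where "p = \<Phi> E 0"
  have crest: "upper_branch b a c p" "Vpot b a c p = E"
    using is_profile_crest_upper_branch[OF assms(1,2) profiles[OF assms(2)]]
      is_profile_turning_point(2)[OF profiles[OF assms(2)]] unfolding p_def by auto
  then have "p < c" "0 < dVpot b a c p"
    using dVpot_pos_iff unfolding upper_branch_def by auto
  have "\<forall>\<^sub>F z in nhds p. upper_branch b a c z"
    using eventually_upper_branch[where k = "\<lambda>_. c" and q = "\<lambda>z. z" and x = p] \<open>b > 0\<close> crest(1) by simp
  moreover have "\<forall>\<^sub>F z in nhds p. Vpot b a c (phi2 b a c) < Vpot b a c z"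
    "\<forall>\<^sub>F z in nhds p. Vpot b a c z < Vpot b a c (phi1 b a c)"
    using isCont_eventually_greater[OF isCont_Vpot[OF \<open>b \<noteq> 1\<close> \<open>p < c\<close>]]
      isCont_eventually_less[OF isCont_Vpot[OF \<open>b \<noteq> 1\<close> \<open>p < c\<close>]] crest(2) region(4,5)
    by auto
  ultimately have "\<forall>\<^sub>F z in nhds p. isCont (Vpot b a c) z \<and> \<Phi> (Vpot b a c z) 0 = z"
  proof eventually_elim
    case (elim z)
    then have "(a, Vpot b a c z, c) \<in> regionB b"
      using region mem_regionB_iff[OF \<open>b > 1\<close>] by auto
    then show ?case
      using is_profile_crest_eq[OF \<open>b > 1\<close> _ profiles] isCont_Vpot[OF \<open>b \<noteq> 1\<close>] elim(1)
      unfolding upper_branch_def by auto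
  qed
  from DERIV_left_inverse[OF Vpot_has_real_derivative[OF \<open>b \<noteq> 1\<close> \<open>p < c\<close>] _ this]
  show ?thesis using \<open>0 < dVpot b a c p\<close> crest(2) unfolding p_def by simp
qed

(* Solving Vpot b a c q = E for q > 0 in terms of the gap s = c - q: the speed is then
   s + crest_of_gap b a E s, and inverting this map differentiates the gap with respect to c. *)
definition crest_of_gap :: "real \<Rightarrow> real \<Rightarrow> real \<Rightarrow> real \<Rightarrow> real" where
  "crest_of_gap b a E s = sqrt (2 * (a / (b - 1) * s powr (1 - b) - E))"

lemma crest_of_gap_eq:
  assumes "q < k" "0 < q" "Vpot b a k q = E"
  shows "crest_of_gap b a E (k - q) = q"
proof -
  have "2 * (a / (b - 1) * (k - q) powr (1 - b) - E) = q\<^sup>2"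
    using Vpot_eq_powr[OF \<open>q < k\<close>] assms(3) by simp
  then show ?thesis unfolding crest_of_gap_def using \<open>0 < q\<close> by simp
qed

lemma Vpot_crest_of_gap:
  assumes "0 < s" "0 < crest_of_gap b a E s"
  shows "Vpot b a (s + crest_of_gap b a E s) (crest_of_gap b a E s) = E"
proof -
  let ?q = "crest_of_gap b a E s"
  define Y where "Y = a / (b - 1) * s powr (1 - b)"
  have q2: "?q\<^sup>2 = 2 * (Y - E)"
    using assms(2) unfolding crest_of_gap_def Y_def by simp
  have "Vpot b a (s + ?q) ?q = - (?q\<^sup>2) / 2 + Y"
    using Vpot_eq_powr[of ?q "s + ?q" b a] assms unfolding Y_def by simp
  then show ?thesis unfolding q2 by (simp add: diff_divide_distrib)
qed

lemma crest_of_gap_has_real_derivative: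
  assumes "b \<noteq> 1" "0 < s" "0 < crest_of_gap b a E s"
  shows "(crest_of_gap b a E has_real_derivative - a / s powr b / crest_of_gap b a E s) (at s)"
proof -
  define R where "R s = 2 * (a / (b - 1) * s powr (1 - b) - E)" for s
  have "0 < R s" using assms(3) unfolding crest_of_gap_def R_def by simp
  have "(R has_real_derivative 2 * (a / (b - 1) * ((1 - b) * s powr (1 - b - 1)))) (at s)"
    unfolding R_def using \<open>0 < s\<close> assms(1) by (auto intro!: derivative_eq_intros)
  moreover have "2 * (a / (b - 1) * ((1 - b) * s powr (1 - b - 1))) = - 2 * a / s powr b"
    using assms(1,2) powr_minus_divide[of s b] by (simp add: field_simps)
  ultimately have "(R has_real_derivative - 2 * a / s powr b) (at s)" by simp
  from DERIV_chain2[where g = R, OF DERIV_real_sqrt[OF \<open>0 < R s\<close>] this]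
  have "((\<lambda>s. sqrt (R s)) has_real_derivative inverse (sqrt (R s)) / 2 * (- 2 * a / s powr b)) (at s)" .
  moreover have "inverse (sqrt (R s)) / 2 * (- 2 * a / s powr b) = - a / s powr b / sqrt (R s)"
    by (simp add: field_simps)
  ultimately show ?thesis unfolding crest_of_gap_def R_def[symmetric] by simp
qed

lemma crest_gap_has_derivative_speed:
  assumes "b > 1" "(a, E, c) \<in> regionB b"
    and profiles: "\<And>k. (a, E, k) \<in> regionB b \<Longrightarrow> is_profile b a E k (\<Phi> k)"
  shows "((\<lambda>k. k - \<Phi> k 0) has_real_derivative - \<Phi> c 0 / dVpot b a c (\<Phi> c 0)) (at c)"
proof -
  have "b \<noteq> 1" "b > 0" using \<open>b > 1\<close> by auto
  define p where "p = \<Phi> c 0"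
  define s where "s = c - p"
  define F where "F \<sigma> = \<sigma> + crest_of_gap b a E \<sigma>" for \<sigma>
  have crest: "upper_branch b a c p" "Vpot b a c p = E"
    using is_profile_crest_upper_branch[OF assms(1,2) profiles[OF assms(2)]]
      is_profile_turning_point(2)[OF profiles[OF assms(2)]] unfolding p_def by auto
  then have "0 < p" "0 < s" "0 < dVpot b a c p"
    using upper_branch_pos[OF \<open>b > 0\<close>] dVpot_pos_iff unfolding upper_branch_def s_def by auto
  have crest_s: "crest_of_gap b a E s = p" and "F s = c"
    using crest_of_gap_eq[of p c] crest \<open>0 < p\<close> \<open>0 < s\<close> unfolding s_def F_def by auto
  have F': "(F has_real_derivative 1 - a / \<sigma> powr b / crest_of_gap b a E \<sigma>) (at \<sigma>)"
    if "0 < \<sigma>" "0 < crest_of_gap b a E \<sigma>" for \<sigma>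
    unfolding F_def using crest_of_gap_has_real_derivative[OF \<open>b \<noteq> 1\<close> that]
    by (auto intro!: derivative_eq_intros)
  have "1 - a / s powr b / p = - dVpot b a c p / p"
    using \<open>0 < p\<close> unfolding dVpot_def s_def by (simp add: field_simps)
  note F's = F'[OF \<open>0 < s\<close>, unfolded crest_s this]
  have "isCont F s" "isCont (crest_of_gap b a E) s"
    using F's crest_of_gap_has_real_derivative[OF \<open>b \<noteq> 1\<close> \<open>0 < s\<close>] crest_s \<open>0 < p\<close>
    by (auto dest: DERIV_isCont)
  then have "\<forall>\<^sub>F \<sigma> in nhds s. upper_branch b a (F \<sigma>) (crest_of_gap b a E \<sigma>)"
    using eventually_upper_branch[OF \<open>b > 0\<close>, where k = F and x = s and q = "crest_of_gap b a E"]
      crest(1) crest_s \<open>F s = c\<close> by simp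
  moreover have "(F \<longlongrightarrow> c) (nhds s)"
    using \<open>isCont F s\<close> \<open>F s = c\<close> unfolding isCont_def tendsto_at_iff_tendsto_nhds by simp
  then have "\<forall>\<^sub>F \<sigma> in nhds s. (a, E, F \<sigma>) \<in> regionB b"
    by (rule eventually_compose_filterlim[OF regionB_eventually_nhds_speed[OF assms(1,2)]])
  moreover have "\<forall>\<^sub>F \<sigma> in nhds s. 0 < \<sigma>"
    using isCont_eventually_greater[OF continuous_ident \<open>0 < s\<close>] .
  ultimately have "\<forall>\<^sub>F \<sigma> in nhds s. isCont F \<sigma> \<and> F \<sigma> - \<Phi> (F \<sigma>) 0 = \<sigma>"
  proof eventually_elim
    case (elim \<sigma>)
    then have "0 < crest_of_gap b a E \<sigma>" using upper_branch_pos[OF \<open>b > 0\<close>] by blast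
    then have "\<Phi> (F \<sigma>) 0 = crest_of_gap b a E \<sigma>"
      using is_profile_crest_eq[OF \<open>b > 1\<close> elim(2) profiles[OF elim(2)] elim(1)]
        Vpot_crest_of_gap[OF elim(3)] unfolding F_def by simp
    then show ?case
      using F'[OF elim(3) \<open>0 < crest_of_gap b a E \<sigma>\<close>] DERIV_isCont unfolding F_def by auto
  qed
  from DERIV_left_inverse[OF F's _ this]
  show ?thesis using \<open>0 < p\<close> \<open>0 < dVpot b a c p\<close> \<open>F s = c\<close> unfolding p_def by simp
qed

lemma crest_momentum_partials:
  assumes "b > 1" "(a, E, c) \<in> regionB b"
    and Phi: "\<And>a' E' c'. (a', E', c') \<in> regionB b \<Longrightarrow> is_profile b a' E' c' (Phi a' E' c')"
  obtains K D where "0 < K" "0 < D"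
    "has_partials_Ec (\<lambda>a' E' c'. momentum b a' c' (Phi a' E' c') 0) a E c (K / D) (K * Phi a E c 0 / D)"
proof -
  define p where "p = Phi a E c 0"
  define D where "D = dVpot b a c p"
  define K where "K = a * b * (c - p) powr (- b - 1)"
  have "p < c" using is_profile_below[OF Phi[OF assms(2)]] unfolding p_def .
  have "0 < K" "0 < D"
    using is_profile_crest_upper_branch[OF assms(1,2) Phi[OF assms(2)]] assms(1,2) \<open>p < c\<close>
      mem_regionB_iff dVpot_pos_iff unfolding upper_branch_def p_def D_def K_def by auto
  have chain: "((\<lambda>x. a * g x powr (- b)) has_real_derivative
      - (a * b * g x powr (- b - 1)) * g') (at x)"
    if "(g has_real_derivative g') (at x)" "0 < g x" for g g' x
    using DERIV_cmult[OF DERIV_fun_powr[OF that, of "- b"], of a] by (simp add: algebra_simps)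
  have momentum_at_0: "momentum b a k \<phi> 0 = a * (k - \<phi> 0) powr (- b)" for k \<phi>
    unfolding momentum_def by (simp add: powr_minus divide_inverse)
  have "((\<lambda>e. c - Phi a e c 0) has_real_derivative - inverse D) (at E)"
    using crest_has_derivative_energy[OF assms(1,2), of "\<lambda>e. Phi a e c"] Phi unfolding p_def D_def
    by (auto intro!: derivative_eq_intros)
  from chain[OF this]
  have mu_E: "((\<lambda>e. momentum b a c (Phi a e c) 0) has_real_derivative K / D) (at E)"
    using \<open>p < c\<close> unfolding momentum_at_0 p_def K_def by (simp add: field_simps)
  have "((\<lambda>k. k - Phi a E k 0) has_real_derivative - p / D) (at c)"
    using crest_gap_has_derivative_speed[OF assms(1,2), of "Phi a E"] Phi unfolding p_def D_def by auto
  from chain[OF this]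
  have mu_c: "((\<lambda>k. momentum b a k (Phi a E k) 0) has_real_derivative K * p / D) (at c)"
    using \<open>p < c\<close> unfolding momentum_at_0 p_def K_def by (simp add: field_simps)
  show ?thesis
    using that[OF \<open>0 < K\<close> \<open>0 < D\<close>] mu_E mu_c unfolding has_partials_Ec_def p_def by blast
qed

lemma omega1_partials:
  assumes "0 < a"
  shows "has_partials_Ec (omega1 b) a E c ((b - 1) / a powr (1 / b)) ((b - 1) / a powr (1 / b) * c)"
  unfolding has_partials_Ec_def omega1_def using assms
  by (auto intro!: derivative_eq_intros simp: field_simps)

theorem lemmaA1:
  fixes b a E c :: real
    and Phi :: "real \<Rightarrow> real \<Rightarrow> real \<Rightarrow> real \<Rightarrow> real"
  assumes b: "b > 1"
    and inB: "(a, E, c) \<in> regionB b"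
    and Phi: "\<And>a' E' c'. (a', E', c') \<in> regionB b \<Longrightarrow> is_profile b a' E' c' (Phi a' E' c')"
  shows "deriv (deriv (momentum b a c (Phi a E c))) 0 < 0 \<and>
         (\<exists>mE mc wE wc.
            has_partials_Ec (\<lambda>a' E' c'. momentum b a' c' (Phi a' E' c') 0) a E c mE mc \<and>
            has_partials_Ec (omega1 b) a E c wE wc \<and>
            mE * wc - mc * wE > 0)"
proof -
  obtain K D where "0 < K" "0 < D" and mu_partials:
    "has_partials_Ec (\<lambda>a' E' c'. momentum b a' c' (Phi a' E' c') 0) a E c (K / D) (K * Phi a E c 0 / D)"
    using crest_momentum_partials[OF b inB Phi] .
  define W where "W = (b - 1) / a powr (1 / b)"
  have "0 < a" using inB mem_regionB_iff[OF b] by simp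
  then have "0 < W" using b unfolding W_def by simp
  have "Phi a E c 0 < c" using is_profile_below[OF Phi[OF inB]] .
  have "K / D * (W * c) - K * Phi a E c 0 / D * W = K * W * (c - Phi a E c 0) / D"
    using \<open>0 < D\<close> by (simp add: field_simps)
  also have "\<dots> > 0"
    using \<open>0 < K\<close> \<open>0 < W\<close> \<open>0 < D\<close> \<open>Phi a E c 0 < c\<close> by simp
  finally show ?thesis
    using momentum_second_deriv_at_crest[OF b inB Phi[OF inB]] mu_partials
      omega1_partials[OF \<open>0 < a\<close>, of b E c, folded W_def] by blast
qed

end
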